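(* Consider the greedy algorithm (described in the context) run on a finite principal left ideal ring $R$ with a respectful order $<$, an ordered basis $B$ of $R^n$ and a left multiplicative property $P$ on $R^n$. Then each set $C_i$ ($0\le i\le n$) produced by the algorithm is a left $R$-submodule of $R^n$, and $P[x]$ is true for every nonzero $x\in C_i$.
   Context: $R$ is a finite principal left ideal ring with unit group $R^\ast$; codes are left submodules of $R^n$. A property $P:R^n\to\{\text{true},\text{false}\}$ is left multiplicative if $P[ux]=P[x]$ for all $u\in R^\ast$, $x\in R^n$. A total order $<$ on $R$ is respectful if for all nonzero $x,y\in R$ with $Rx\supsetneq Ry$ there is $\alpha\in R^\ast$ with $\alpha x<uy$ for all $u\in R^\ast$. Fix an ordered basis $B=(b_1,\dots,b_n)$ of the free left module $R^n$; put $V_0=\{0\}$ and $V_i=Rb_1+\dots+Rb_i$. The lexicographic order on $R^n$: if $x\in V_{i-1}$ and $y\in V_i\setminus V_{i-1}$ then $x<y$; if $x\ne y$ both lie in the level set $V_i\setminus V_{i-1}$, write $x=\sum_{j\le i}x_jb_j$, $y=\sum_{j\le i}y_jb_j$, let $k$ be the largest index with $x_k\ne y_k$, and set $x<y$ iff $x_k<y_k$ in $R$. Fix a set $\Gamma\subseteq R$ containing one generator of each nonzero left ideal of $R$. Greedy algorithm: $C_0=\{0\}$; for $i=1,\dots,n$, let $a_i$ be the smallest vector of $V_i\setminus V_{i-1}$ (if any) such that $P[\gamma a_i+c]$ is true for all $\gamma\in\Gamma$ and all $c\in C_{i-1}$; if such $a_i$ exists set $C_i=Ra_i+C_{i-1}$,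 otherwise $C_i=C_{i-1}$. The output $C_n$ is the lexicode $C(<,B,P)$. *)

theory Defs
  imports Main
begin

text \<open>Vectors of R^n are represented as functions nat => 'r vanishing at indices >= n.\<close>

definition rvec :: "nat \<Rightarrow> (nat \<Rightarrow> 'r::ring_1) set" where
  "rvec n = {x. \<forall>j\<ge>n. x j = 0}"

definition vzero :: "nat \<Rightarrow> 'r::ring_1" where
  "vzero = (\<lambda>_. 0)"

definition vadd :: "(nat \<Rightarrow> 'r::ring_1) \<Rightarrow> (nat \<Rightarrow> 'r) \<Rightarrow> (nat \<Rightarrow> 'r)" where
  "vadd x y = (\<lambda>t. x t + y t)"

definition vsmult :: "'r::ring_1 \<Rightarrow> (nat \<Rightarrow> 'r) \<Rightarrow> (nat \<Rightarrow> 'r)" where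
  "vsmult c x = (\<lambda>t. c * x t)"

definition ring_units :: "'r::ring_1 set" where
  "ring_units = {u. \<exists>v. u * v = 1 \<and> v * u = 1}"

definition is_left_ideal :: "'r::ring_1 set \<Rightarrow> bool" where
  "is_left_ideal I \<longleftrightarrow> 0 \<in> I \<and> (\<forall>x\<in>I. \<forall>y\<in>I. x + y \<in> I \<and> x - y \<in> I)
     \<and> (\<forall>r. \<forall>x\<in>I. r * x \<in> I)"

definition left_ideal_gen :: "'r::ring_1 \<Rightarrow> 'r set" where
  "left_ideal_gen x = {r * x | r. True}"

definition principal_left_ideal_ring :: "'r::ring_1 itself \<Rightarrow> bool" where
  "principal_left_ideal_ring _ \<longleftrightarrow>
     (\<forall>I::'r set. is_left_ideal I \<longrightarrow> (\<exists>g. I = left_ideal_gen g))"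

definition is_left_submodule :: "nat \<Rightarrow> (nat \<Rightarrow> 'r::ring_1) set \<Rightarrow> bool" where
  "is_left_submodule n C \<longleftrightarrow> C \<subseteq> rvec n \<and> vzero \<in> C
     \<and> (\<forall>x\<in>C. \<forall>y\<in>C. vadd x y \<in> C) \<and> (\<forall>r. \<forall>x\<in>C. vsmult r x \<in> C)"

definition left_multiplicative :: "nat \<Rightarrow> ((nat \<Rightarrow> 'r::ring_1) \<Rightarrow> bool) \<Rightarrow> bool" where
  "left_multiplicative n P \<longleftrightarrow> (\<forall>u\<in>ring_units. \<forall>x\<in>rvec n. P (vsmult u x) = P x)"

definition strict_total_order :: "('r \<Rightarrow> 'r \<Rightarrow> bool) \<Rightarrow> bool" where
  "strict_total_order lt \<longleftrightarrow> (\<forall>x. \<not> lt x x) \<and> (\<forall>x y z. lt x y \<longrightarrow> lt y z \<longrightarrow> lt x z)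
     \<and> (\<forall>x y. x \<noteq> y \<longrightarrow> lt x y \<or> lt y x)"

definition respectful :: "('r::ring_1 \<Rightarrow> 'r \<Rightarrow> bool) \<Rightarrow> bool" where
  "respectful lt \<longleftrightarrow> strict_total_order lt \<and>
     (\<forall>x y. x \<noteq> 0 \<longrightarrow> y \<noteq> 0 \<longrightarrow> left_ideal_gen y \<subset> left_ideal_gen x \<longrightarrow>
        (\<exists>\<alpha>\<in>ring_units. \<forall>u\<in>ring_units. lt (\<alpha> * x) (u * y)))"

definition lincomb :: "(nat \<Rightarrow> nat \<Rightarrow> 'r::ring_1) \<Rightarrow> nat \<Rightarrow> (nat \<Rightarrow> 'r) \<Rightarrow> (nat \<Rightarrow> 'r)" where
  "lincomb b i c = (\<lambda>t. \<Sum>j=1..i. c j * b j t)"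

definition ordered_basis :: "nat \<Rightarrow> (nat \<Rightarrow> nat \<Rightarrow> 'r::ring_1) \<Rightarrow> bool" where
  "ordered_basis n b \<longleftrightarrow> (\<forall>j\<in>{1..n}. b j \<in> rvec n) \<and>
     (\<forall>x\<in>rvec n. \<exists>!c. (\<forall>j. j \<notin> {1..n} \<longrightarrow> c j = 0) \<and> x = lincomb b n c)"

definition Vspan :: "(nat \<Rightarrow> nat \<Rightarrow> 'r::ring_1) \<Rightarrow> nat \<Rightarrow> (nat \<Rightarrow> 'r) set" where
  "Vspan b i = {lincomb b i c | c. True}"

definition coord :: "nat \<Rightarrow> (nat \<Rightarrow> nat \<Rightarrow> 'r::ring_1) \<Rightarrow> (nat \<Rightarrow> 'r) \<Rightarrow> nat \<Rightarrow> 'r" where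
  "coord n b x = (THE c. (\<forall>j. j \<notin> {1..n} \<longrightarrow> c j = 0) \<and> x = lincomb b n c)"

definition level :: "(nat \<Rightarrow> nat \<Rightarrow> 'r::ring_1) \<Rightarrow> nat \<Rightarrow> (nat \<Rightarrow> 'r) set" where
  "level b i = Vspan b i - Vspan b (i - 1)"

definition lex_less :: "('r::ring_1 \<Rightarrow> 'r \<Rightarrow> bool) \<Rightarrow> nat \<Rightarrow> (nat \<Rightarrow> nat \<Rightarrow> 'r)
    \<Rightarrow> (nat \<Rightarrow> 'r) \<Rightarrow> (nat \<Rightarrow> 'r) \<Rightarrow> bool" where
  "lex_less lt n b x y \<longleftrightarrow>
     (\<exists>i\<in>{1..n}. x \<in> Vspan b (i - 1) \<and> y \<in> level b i) \<or>
     (\<exists>i\<in>{1..n}. x \<in> level b i \<and> y \<in> level b i \<and> x \<noteq> y \<and>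
        (let k = Max {j. coord n b x j \<noteq> coord n b y j} in lt (coord n b x k) (coord n b y k)))"

definition generator_system :: "'r::ring_1 set \<Rightarrow> bool" where
  "generator_system \<Gamma> \<longleftrightarrow> (\<forall>\<gamma>\<in>\<Gamma>. left_ideal_gen \<gamma> \<noteq> {0}) \<and>
     (\<forall>I. is_left_ideal I \<longrightarrow> I \<noteq> {0} \<longrightarrow> (\<exists>!\<gamma>. \<gamma> \<in> \<Gamma> \<and> left_ideal_gen \<gamma> = I))"

definition candidates :: "nat \<Rightarrow> (nat \<Rightarrow> nat \<Rightarrow> 'r::ring_1) \<Rightarrow> ((nat \<Rightarrow> 'r) \<Rightarrow> bool)
    \<Rightarrow> 'r set \<Rightarrow> nat \<Rightarrow> (nat \<Rightarrow> 'r) set \<Rightarrow> (nat \<Rightarrow> 'r) set" where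
  "candidates n b P \<Gamma> i C = {a \<in> level b i. \<forall>\<gamma>\<in>\<Gamma>. \<forall>c\<in>C. P (vadd (vsmult \<gamma> a) c)}"

primrec greedy :: "('r::ring_1 \<Rightarrow> 'r \<Rightarrow> bool) \<Rightarrow> nat \<Rightarrow> (nat \<Rightarrow> nat \<Rightarrow> 'r)
    \<Rightarrow> ((nat \<Rightarrow> 'r) \<Rightarrow> bool) \<Rightarrow> 'r set \<Rightarrow> nat \<Rightarrow> (nat \<Rightarrow> 'r) set" where
  "greedy lt n b P \<Gamma> 0 = {vzero}"
| "greedy lt n b P \<Gamma> (Suc i) =
     (let C = greedy lt n b P \<Gamma> i; S = candidates n b P \<Gamma> (Suc i) C in
      if S = {} then C
      else (let a = (THE a. a \<in> S \<and> (\<forall>y\<in>S. y \<noteq> a \<longrightarrow> lex_less lt n b a y))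
            in {vadd (vsmult r a) c | r c. c \<in> C}))"

end

theory Submission
  imports Defs
begin

text \<open>Each \<open>C\<^sub>i\<close> is \<open>R a\<^sub>i + C\<^sub>i\<^sub>-\<^sub>1\<close>, so it is a submodule. A nonzero element \<open>r a\<^sub>i + c\<close> of it with
  \<open>r \<noteq> 0\<close> satisfies \<open>R r = R \<gamma>\<close> for some \<open>\<gamma> \<in> \<Gamma>\<close>. In a finite ring this forces \<open>r = u \<gamma>\<close> with \<open>u\<close> a
  unit, so \<open>r a\<^sub>i + c = u (\<gamma> a\<^sub>i + u\<^sup>-\<^sup>1 c)\<close>, and \<open>P\<close> passes from \<open>\<gamma> a\<^sub>i + u\<^sup>-\<^sup>1 c\<close>, where it holds by the
  choice of \<open>a\<^sub>i\<close>, to \<open>r a\<^sub>i + c\<close> by left multiplicativity.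

  The unit lemma carries the weight. From \<open>r = s g\<close> and \<open>g = t r\<close>, suitable powers \<open>f\<close> of \<open>t s\<close> and
  \<open>f'\<close> of \<open>s t\<close> are idempotents with \<open>R f \<cong> R f'\<close>. Since \<open>Hom(R p, Y) \<cong> p Y\<close> for idempotent \<open>p\<close>, counting
  homomorphisms into every left ideal and inverting over the lattice of left ideals shows that
  \<open>R(1 - f) \<cong> R(1 - f')\<close>, via right multiplication by some \<open>z\<close>. Then \<open>u = s f + z\<close> satisfies \<open>u g = r\<close> and
  has zero left annihilator, hence is a unit because the ring is finite.\<close>

section \<open>Left associates in a finite ring\<close>

lemma finite_monoid_idempotent_power:
  fixes e :: "'a::{monoid_mult,finite}"
  obtains N where "N \<ge> 1" "e^N * e^N = e^N"
proof -
  have "\<not> inj (\<lambda>k::nat. e^k)"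
    using finite_imageD[of "\<lambda>k::nat. e^k" UNIV] by auto
  then obtain i j :: nat where "i < j" and ij: "e^i = e^j"
    by (metis injI linorder_neqE_nat)
  define p where "p = j - i"
  have period: "e^(m + p) = e^m" if "i \<le> m" for m
  proof -
    have "m + p = j + (m - i)" using that \<open>i < j\<close> by (simp add: p_def)
    then have "e^(m + p) = e^j * e^(m - i)" by (simp add: power_add)
    also have "\<dots> = e^m"
      using that by (simp add: ij[symmetric] flip: power_add)
    finally show ?thesis .
  qed
  have periods: "e^(m + k * p) = e^m" if "i \<le> m" for m k
  proof (induction k)
    case (Suc k)
    have "e^(m + Suc k * p) = e^((m + k * p) + p)" by (simp add: algebra_simps)
    also have "\<dots> = e^m" using period[of "m + k * p"] that Suc by simp
    finally show ?case .
  qed simp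
  have "p \<ge> 1" using \<open>i < j\<close> by (simp add: p_def)
  then have "(i + 1) * p \<ge> i + 1" by (metis mult.right_neutral mult_le_mono2)
  moreover have "e^((i + 1) * p) * e^((i + 1) * p) = e^((i + 1) * p)"
    using periods[of "(i + 1) * p" "i + 1"] calculation by (simp flip: power_add)
  ultimately show ?thesis using that[of "(i + 1) * p"] by simp
qed

lemma finite_monoid_common_idempotent_power:
  fixes a b :: "'a::{monoid_mult,finite}"
  obtains N where "N \<ge> 1" "a^N * a^N = a^N" "b^N * b^N = b^N"
proof -
  obtain Na where Na: "Na \<ge> 1" "a^Na * a^Na = a^Na" using finite_monoid_idempotent_power by blast
  obtain Nb where Nb: "Nb \<ge> 1" "b^Nb * b^Nb = b^Nb" using finite_monoid_idempotent_power by blast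
  have idem_power: "x^(M * k) = x^M" if "x^M * x^M = x^M" "k \<ge> 1" for x :: 'a and M k
    using \<open>k \<ge> 1\<close> by (induction k rule: dec_induct) (simp_all add: power_add that(1))
  have "a^(Na * Nb) = a^Na" "b^(Na * Nb) = b^Nb"
    using idem_power[OF Na(2) Nb(1)] idem_power[OF Nb(2) Na(1)] by (simp_all add: mult.commute)
  moreover have "Na * Nb \<ge> 1" using Na Nb by simp
  ultimately show ?thesis using that[of "Na * Nb"] Na Nb by simp
qed

lemma mult_power_shift:
  fixes s t :: "'a::monoid_mult"
  shows "s * (t * s)^k = (s * t)^k * s"
proof (induction k)
  case (Suc k)
  have "s * (t * s)^Suc k = (s * (t * s)^k) * t * s" by (simp only: power_Suc2 mult.assoc)
  also have "\<dots> = (s * t)^Suc k * s" by (simp only: Suc power_Suc2 mult.assoc)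
  finally show ?case .
qed simp

lemma left_ideal_gen_eq_range: "left_ideal_gen x = range (\<lambda>r. r * x)"
  unfolding left_ideal_gen_def by auto

lemma left_ideal_gen_self: "x \<in> left_ideal_gen x"
  unfolding left_ideal_gen_eq_range by (metis mult_1_left rangeI)

lemma is_left_ideal_left_ideal_gen: "is_left_ideal (left_ideal_gen x)"
  unfolding is_left_ideal_def left_ideal_gen_eq_range
  by (auto simp: image_iff intro: exI[of _ 0] exI[of _ "_ + _"] exI[of _ "_ - _"] exI[of _ "_ * _"]
      distrib_right[symmetric] left_diff_distrib[symmetric] mult.assoc[symmetric])

lemma left_ideal_mult_closed: "is_left_ideal Y \<Longrightarrow> y \<in> Y \<Longrightarrow> r * y \<in> Y"
  unfolding is_left_ideal_def by blast

lemma left_ideal_add_closed: "is_left_ideal Y \<Longrightarrow> x \<in> Y \<Longrightarrow> y \<in> Y \<Longrightarrow> x + y \<in> Y"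
  unfolding is_left_ideal_def by blast

lemma left_ideal_gen_subset: "is_left_ideal Y \<Longrightarrow> y \<in> Y \<Longrightarrow> left_ideal_gen y \<subseteq> Y"
  unfolding left_ideal_gen_eq_range using left_ideal_mult_closed by blast

lemma finite_ring_left_regular_imp_unit:
  fixes u :: "'a::{ring_1,finite}"
  assumes "\<And>x. x * u = 0 \<Longrightarrow> x = 0"
  shows "u \<in> ring_units"
proof -
  have surj_mult: "surj (\<lambda>x. x * w)" if "\<And>x. x * w = 0 \<Longrightarrow> x = 0" for w :: 'a
  proof -
    have "inj (\<lambda>x. x * w)" by (rule injI) (metis that eq_iff_diff_eq_0 left_diff_distrib)
    then show ?thesis by (simp add: finite_UNIV_inj_surj)
  qed
  obtain v where vu: "v * u = 1" using surj_mult[OF assms] by (metis surjD)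
  have "x = 0" if "x * v = 0" for x
    using assms[of x] that vu by (metis mult.assoc mult_1_right mult_zero_left)
  then obtain w where wv: "w * v = 1" using surj_mult by (metis surjD)
  have "w = u" by (metis vu wv mult.assoc mult_1_left mult_1_right)
  with vu wv show ?thesis unfolding ring_units_def by blast
qed

lemma card_left_ideal_idempotent_split:
  fixes p :: "'a::{ring_1,finite}"
  assumes p: "p * p = p" and Y: "is_left_ideal Y"
  shows "card Y = card ((*) p ` Y) * card ((*) (1 - p) ` Y)"
proof -
  have "bij_betw (\<lambda>y. (p * y, (1 - p) * y)) Y ((*) p ` Y \<times> (*) (1 - p) ` Y)"
  proof (rule bij_betw_imageI)
    show "inj_on (\<lambda>y. (p * y, (1 - p) * y)) Y"
    proof (rule inj_onI)
      fix x y assume "(p * x, (1 - p) * x) = (p * y, (1 - p) * y)"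
      then have "p * x + (1 - p) * x = p * y + (1 - p) * y" by simp
      then show "x = y" by (simp add: algebra_simps)
    qed
    show "(\<lambda>y. (p * y, (1 - p) * y)) ` Y = (*) p ` Y \<times> (*) (1 - p) ` Y"
    proof
      show "(\<lambda>y. (p * y, (1 - p) * y)) ` Y \<subseteq> (*) p ` Y \<times> (*) (1 - p) ` Y" by blast
    next
      show "(*) p ` Y \<times> (*) (1 - p) ` Y \<subseteq> (\<lambda>y. (p * y, (1 - p) * y)) ` Y"
      proof (clarsimp)
        fix y y' assume "y \<in> Y" "y' \<in> Y"
        then have "p * y + (1 - p) * y' \<in> Y"
          using Y left_ideal_mult_closed left_ideal_add_closed by blast
        moreover have "p * (p * y + (1 - p) * y') = p * y"
          using p by (simp add: distrib_left right_diff_distrib left_diff_distrib flip: mult.assoc)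
        moreover have "(1 - p) * (p * y + (1 - p) * y') = (1 - p) * y'"
          using p by (simp add: distrib_left right_diff_distrib left_diff_distrib flip: mult.assoc)
        ultimately show "(p * y, (1 - p) * y') \<in> (\<lambda>y. (p * y, (1 - p) * y)) ` Y"
          by (intro image_eqI[where x = "p * y + (1 - p) * y'"]) simp_all
      qed
    qed
  qed
  then have "card Y = card ((*) p ` Y \<times> (*) (1 - p) ` Y)" by (rule bij_betw_same_card)
  then show ?thesis by (simp add: card_cartesian_product)
qed

lemma card_mult_idempotent_power_le:
  fixes s t :: "'a::{ring_1,finite}"
  assumes idem: "(t * s)^N * (t * s)^N = (t * s)^N" and "N \<ge> 1" and Y: "is_left_ideal Y"
  shows "card ((*) ((t * s)^N) ` Y) \<le> card ((*) ((s * t)^N) ` Y)"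
proof (rule card_inj_on_le[of "(*) s"])
  show "inj_on ((*) s) ((*) ((t * s)^N) ` Y)"
  proof (rule inj_onI)
    fix x y assume x: "x \<in> (*) ((t * s)^N) ` Y" and y: "y \<in> (*) ((t * s)^N) ` Y"
      and "s * x = s * y"
    have "(t * s)^N = (t * s)^(N - 1) * t * s"
      using \<open>N \<ge> 1\<close> by (simp add: mult.assoc flip: power_Suc2)
    then have "(t * s)^N * x = (t * s)^N * y"
      using \<open>s * x = s * y\<close> by (simp add: mult.assoc)
    moreover have "(t * s)^N * x = x" "(t * s)^N * y = y"
      using x y idem by (auto simp flip: mult.assoc)
    ultimately show "x = y" by simp
  qed
  show "(*) s ` (*) ((t * s)^N) ` Y \<subseteq> (*) ((s * t)^N) ` Y"
  proof clarify
    fix y assume "y \<in> Y"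
    then have "s * y \<in> Y" by (rule left_ideal_mult_closed[OF Y])
    moreover have "s * ((t * s)^N * y) = (s * t)^N * (s * y)"
      by (simp add: mult_power_shift flip: mult.assoc)
    ultimately show "s * ((t * s)^N * y) \<in> (*) ((s * t)^N) ` Y" by simp
  qed
qed simp

text \<open>Under \<open>Hom(R p, Y) \<cong> p Y\<close> (\<open>p\<close> idempotent), \<open>generators_in p Y\<close> corresponds to the epimorphisms.\<close>

definition generators_in :: "'a::ring_1 \<Rightarrow> 'a set \<Rightarrow> 'a set" where
  "generators_in p Y = {z \<in> (*) p ` Y. left_ideal_gen z = Y}"

lemma card_mult_image_eq_sum_generators_in:
  fixes p :: "'a::{ring_1,finite}"
  assumes p: "p * p = p" and Y: "is_left_ideal Y"
  shows "card ((*) p ` Y) = (\<Sum>Y'\<in>{Y'. is_left_ideal Y' \<and> Y' \<subseteq> Y}. card (generators_in p Y'))"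
proof -
  have "(*) p ` Y = (\<Union>Y'\<in>{Y'. is_left_ideal Y' \<and> Y' \<subseteq> Y}. generators_in p Y')"
  proof (intro equalityI subsetI)
    fix z assume "z \<in> (*) p ` Y"
    then obtain y where "y \<in> Y" and z: "z = p * y" by blast
    then have "z \<in> Y" using left_ideal_mult_closed[OF Y] by blast
    moreover have "z = p * z" using p z by (simp flip: mult.assoc)
    ultimately have "z \<in> generators_in p (left_ideal_gen z)" and "left_ideal_gen z \<subseteq> Y"
      using left_ideal_gen_self[of z] left_ideal_gen_subset[OF Y]
      unfolding generators_in_def by (metis (mono_tags, lifting) image_eqI mem_Collect_eq)+
    then show "z \<in> (\<Union>Y'\<in>{Y'. is_left_ideal Y' \<and> Y' \<subseteq> Y}. generators_in p Y')"
      using is_left_ideal_left_ideal_gen by blast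
  qed (auto simp: generators_in_def)
  moreover have "card (\<Union>Y'\<in>{Y'. is_left_ideal Y' \<and> Y' \<subseteq> Y}. generators_in p Y')
      = (\<Sum>Y'\<in>{Y'. is_left_ideal Y' \<and> Y' \<subseteq> Y}. card (generators_in p Y'))"
    by (rule card_UN_disjoint) (auto simp: generators_in_def)
  ultimately show ?thesis by simp
qed

text \<open>Moebius inversion of the previous lemma, by induction over the finite lattice of left ideals.\<close>

lemma card_generators_in_eq:
  fixes p q :: "'a::{ring_1,finite}"
  assumes p: "p * p = p" and q: "q * q = q"
    and count: "\<And>Y. is_left_ideal Y \<Longrightarrow> card ((*) p ` Y) = card ((*) q ` Y)"
    and "is_left_ideal Y"
  shows "card (generators_in p Y) = card (generators_in q Y)"
  using \<open>is_left_ideal Y\<close>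
proof (induction "card Y" arbitrary: Y rule: less_induct)
  case less
  define L where "L = {Y'. is_left_ideal Y' \<and> Y' \<subset> Y}"
  have ideals: "{Y'. is_left_ideal Y' \<and> Y' \<subseteq> Y} = insert Y L" and "Y \<notin> L"
    using less.prems by (auto simp: L_def)
  have "(\<Sum>Y'\<in>L. card (generators_in p Y')) = (\<Sum>Y'\<in>L. card (generators_in q Y'))"
  proof (rule sum.cong)
    fix Y' assume "Y' \<in> L"
    then have "card Y' < card Y" "is_left_ideal Y'" by (auto simp: L_def intro: psubset_card_mono)
    then show "card (generators_in p Y') = card (generators_in q Y')" using less.hyps by blast
  qed simp
  moreover have "card ((*) p ` Y) = card ((*) q ` Y)" by (rule count[OF less.prems])
  ultimately show ?case
    using card_mult_image_eq_sum_generators_in[OF p less.prems]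
      card_mult_image_eq_sum_generators_in[OF q less.prems]
    unfolding ideals using \<open>Y \<notin> L\<close> by simp
qed

lemma generator_in_corner:
  fixes p q :: "'a::{ring_1,finite}"
  assumes p: "p * p = p" and q: "q * q = q"
    and count: "\<And>Y. is_left_ideal Y \<Longrightarrow> card ((*) p ` Y) = card ((*) q ` Y)"
  obtains z where "q * z = z" "z * p = z" "left_ideal_gen z = left_ideal_gen p"
proof -
  have "p \<in> generators_in p (left_ideal_gen p)"
    unfolding generators_in_def using p by (auto intro: image_eqI[OF _ left_ideal_gen_self])
  moreover have "card (generators_in p (left_ideal_gen p)) = card (generators_in q (left_ideal_gen p))"
    by (rule card_generators_in_eq[OF p q _ is_left_ideal_left_ideal_gen]) (fact count)
  ultimately have "generators_in q (left_ideal_gen p) \<noteq> {}"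
    by (metis card_0_eq empty_iff finite)
  then obtain r where "left_ideal_gen (q * (r * p)) = left_ideal_gen p"
    unfolding generators_in_def left_ideal_gen_eq_range by blast
  moreover have "q * (q * (r * p)) = q * (r * p)" "q * (r * p) * p = q * (r * p)"
    using p q by (simp_all add: mult.assoc flip: mult.assoc[of q q])
  ultimately show ?thesis using that by blast
qed

lemma idempotent_left_ideals_iso:
  fixes p q :: "'a::{ring_1,finite}"
  assumes p: "p * p = p" and q: "q * q = q"
    and count: "\<And>Y. is_left_ideal Y \<Longrightarrow> card ((*) p ` Y) = card ((*) q ` Y)"
  obtains z where "q * z = z" "z * p = z" "\<And>x. x * z = 0 \<Longrightarrow> x * q = 0"
proof -
  have onto: "(\<lambda>x. x * z) ` left_ideal_gen q = left_ideal_gen p"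
    if "q * z = z" "left_ideal_gen z = left_ideal_gen p" for p q z :: 'a
  proof -
    have "(\<lambda>x. x * z) ` left_ideal_gen q = left_ideal_gen z"
      unfolding left_ideal_gen_eq_range image_image using that(1) by (simp add: mult.assoc)
    then show ?thesis using that(2) by simp
  qed
  obtain z where z: "q * z = z" "z * p = z" "left_ideal_gen z = left_ideal_gen p"
    by (rule generator_in_corner[OF p q]) (simp_all add: count)
  obtain z' where z': "p * z' = z'" "left_ideal_gen z' = left_ideal_gen q"
    by (rule generator_in_corner[OF q p]) (simp_all add: count)
  have "card (left_ideal_gen p) \<le> card (left_ideal_gen q)"
    using card_image_le[of "left_ideal_gen q" "\<lambda>x. x * z"] onto[OF z(1,3)] by simp
  moreover have "card (left_ideal_gen q) \<le> card (left_ideal_gen p)"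
    using card_image_le[of "left_ideal_gen p" "\<lambda>x. x * z'"] onto[OF z'] by simp
  ultimately have inj: "inj_on (\<lambda>x. x * z) (left_ideal_gen q)"
    using onto[OF z(1,3)] by (intro eq_card_imp_inj_on) simp_all
  have "x * q = 0" if "x * z = 0" for x
    by (rule inj_onD[OF inj])
      (use that z(1) in \<open>auto simp: mult.assoc left_ideal_gen_eq_range intro: range_eqI[of 0 _ 0]\<close>)
  with z show ?thesis using that by blast
qed

lemma card_mult_complement_eq:
  fixes p q :: "'a::{ring_1,finite}"
  assumes p: "p * p = p" and q: "q * q = q" and Y: "is_left_ideal Y"
    and "card ((*) p ` Y) = card ((*) q ` Y)"
  shows "card ((*) (1 - p) ` Y) = card ((*) (1 - q) ` Y)"
proof -
  have "0 \<in> (*) p ` Y" using Y unfolding is_left_ideal_def by force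
  then have "card ((*) p ` Y) \<noteq> 0" by auto
  then show ?thesis
    using card_left_ideal_idempotent_split[OF p Y] card_left_ideal_idempotent_split[OF q Y] assms(4)
    by simp
qed

text \<open>The hypotheses abstract the situation \<open>f = (t s)\<^sup>N\<close>, \<open>f' = (s t)\<^sup>N\<close>, with right multiplication by \<open>z\<close>
  an isomorphism \<open>R(1 - f') \<rightarrow> R(1 - f)\<close>.\<close>

lemma corner_sum_left_regular:
  fixes f f' s k z x :: "'a::ring_1"
  assumes f: "f * f = f" and f': "f' * f' = f'" and sf: "s * f = f' * s" and "f' = s * k"
    and z: "(1 - f') * z = z" "z * (1 - f) = z" and z_regular: "\<And>x. x * z = 0 \<Longrightarrow> x * (1 - f') = 0"
    and "x * (s * f + z) = 0"
  shows "x = 0"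
proof -
  have "z * f = z * (1 - f) * f" using z(2) by simp
  also have "\<dots> = z * (f - f * f)" by (simp add: mult.assoc left_diff_distrib)
  finally have "z * f = 0" using f by simp
  then have "x * (s * f + z) * f = x * s * f" by (simp add: distrib_left distrib_right mult.assoc f)
  then have xsf: "x * s * f = 0" using \<open>x * (s * f + z) = 0\<close> by simp
  then have "x * z = 0" using \<open>x * (s * f + z) = 0\<close> by (simp add: distrib_left mult.assoc)
  then have "x = x * f'" using z_regular by (simp add: algebra_simps)
  also have "\<dots> = x * f' * s * k" using f' by (simp add: mult.assoc flip: \<open>f' = s * k\<close>)
  also have "\<dots> = x * s * f * k" by (simp add: sf mult.assoc)
  finally show "x = 0" using xsf by simp
qed

lemma left_ideal_gen_eq_imp_unit_mult:
  fixes r g :: "'a::{ring_1,finite}"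
  assumes "left_ideal_gen r = left_ideal_gen g"
  obtains u where "u \<in> ring_units" "r = u * g"
proof -
  obtain s t where r: "r = s * g" and g: "g = t * r"
    using assms left_ideal_gen_self[of r] left_ideal_gen_self[of g]
    unfolding left_ideal_gen_eq_range by blast
  obtain N where "N \<ge> 1" and idem_ts: "(t * s)^N * (t * s)^N = (t * s)^N"
    and idem_st: "(s * t)^N * (s * t)^N = (s * t)^N"
    using finite_monoid_common_idempotent_power by blast
  define f where "f = (t * s)^N"
  define f' where "f' = (s * t)^N"
  have f: "f * f = f" and f': "f' * f' = f'" using idem_ts idem_st by (simp_all add: f_def f'_def)
  have "card ((*) f ` Y) = card ((*) f' ` Y)" if "is_left_ideal Y" for Y
    using card_mult_idempotent_power_le[OF idem_ts \<open>N \<ge> 1\<close> that]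
      card_mult_idempotent_power_le[OF idem_st \<open>N \<ge> 1\<close> that] by (simp add: f_def f'_def)
  then have count: "card ((*) (1 - f) ` Y) = card ((*) (1 - f') ` Y)" if "is_left_ideal Y" for Y
    using card_mult_complement_eq[OF f f' that] that by blast
  have "(1 - f) * (1 - f) = 1 - f" "(1 - f') * (1 - f') = 1 - f'"
    using f f' by (simp_all add: algebra_simps)
  then obtain z where z: "(1 - f') * z = z" "z * (1 - f) = z"
    and z_regular: "\<And>x. x * z = 0 \<Longrightarrow> x * (1 - f') = 0"
    by (rule idempotent_left_ideals_iso) (simp_all add: count)
  have "(t * s)^k * g = g" for k
    by (induction k) (simp_all add: mult.assoc flip: r g)
  then have "f * g = g" by (simp add: f_def)
  have "z * g = z * (1 - f) * g" using z(2) by simp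
  also have "\<dots> = 0" using \<open>f * g = g\<close> by (simp add: mult.assoc left_diff_distrib)
  finally have ug: "(s * f + z) * g = r" using \<open>f * g = g\<close> by (simp add: distrib_right mult.assoc flip: r)
  obtain M where "N = Suc M" using \<open>N \<ge> 1\<close> by (cases N) auto
  then have f'_eq: "f' = s * ((t * s)^M * t)"
    by (simp add: f'_def power_Suc2 flip: mult.assoc mult_power_shift)
  have sf: "s * f = f' * s" by (simp add: f_def f'_def mult_power_shift)
  have "s * f + z \<in> ring_units"
    by (rule finite_ring_left_regular_imp_unit) (rule corner_sum_left_regular[OF f f' sf f'_eq z z_regular])
  with ug show ?thesis using that by blast
qed

section \<open>Submodules of \<open>R\<^sup>n\<close> and the lexicographic order\<close>

lemma finite_rvec: "finite (rvec n :: (nat \<Rightarrow> 'a::{ring_1,finite}) set)"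
proof -
  have "rvec n = {x :: nat \<Rightarrow> 'a. \<forall>j. (j \<in> {..<n} \<longrightarrow> x j \<in> UNIV) \<and> (j \<notin> {..<n} \<longrightarrow> x j = 0)}"
    unfolding rvec_def by auto
  then show ?thesis using finite_set_of_finite_funs[of "{..<n}" "UNIV :: 'a set" 0] by simp
qed

lemma is_left_submodule_zero: "is_left_submodule n {vzero}"
  unfolding is_left_submodule_def rvec_def vzero_def vadd_def vsmult_def by simp

lemma is_left_submodule_extend:
  assumes C: "is_left_submodule n C" and a: "a \<in> rvec n"
  shows "is_left_submodule n {vadd (vsmult r a) c | r c. c \<in> C}"
proof -
  have CR: "C \<subseteq> rvec n" and "vzero \<in> C"
    and add: "\<And>x y. x \<in> C \<Longrightarrow> y \<in> C \<Longrightarrow> vadd x y \<in> C"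
    and smult: "\<And>s x. x \<in> C \<Longrightarrow> vsmult s x \<in> C"
    using C unfolding is_left_submodule_def by auto
  have sum: "vadd (vadd (vsmult r a) c) (vadd (vsmult r' a) c') = vadd (vsmult (r + r') a) (vadd c c')"
    and scale: "vsmult s (vadd (vsmult r a) c) = vadd (vsmult (s * r) a) (vsmult s c)"
    and zero: "vzero = vadd (vsmult 0 a) vzero" for r r' s c c'
    unfolding vadd_def vsmult_def vzero_def by (auto simp: algebra_simps)
  have "vadd (vsmult r a) c \<in> rvec n" if "c \<in> C" for r c
    using a CR that unfolding rvec_def vadd_def vsmult_def by auto
  then show ?thesis
    unfolding is_left_submodule_def using \<open>vzero \<in> C\<close> add smult
    by (auto simp: sum scale) (use zero in blast)+
qed

lemma strict_total_orderD:
  assumes "strict_total_order lt"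
  shows "\<not> lt x x" and "lt x y \<Longrightarrow> lt y z \<Longrightarrow> lt x z" and "x \<noteq> y \<Longrightarrow> lt x y \<or> lt y x"
  using assms unfolding strict_total_order_def by blast+

text \<open>Within a level, \<open>lex_less\<close> compares coordinate vectors in this order; unlike the \<open>Max\<close> form
  used there, this formulation is meaningful for arbitrary functions.\<close>

definition colex_less :: "('r \<Rightarrow> 'r \<Rightarrow> bool) \<Rightarrow> (nat \<Rightarrow> 'r) \<Rightarrow> (nat \<Rightarrow> 'r) \<Rightarrow> bool" where
  "colex_less lt p q \<longleftrightarrow> (\<exists>k. lt (p k) (q k) \<and> (\<forall>j>k. p j = q j))"

lemma colex_less_iff_Max:
  assumes lt: "strict_total_order lt" and fin: "finite {j. p j \<noteq> q j}" and "p \<noteq> q"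
  shows "colex_less lt p q \<longleftrightarrow> (let k = Max {j. p j \<noteq> q j} in lt (p k) (q k))"
proof -
  define K where "K = Max {j. p j \<noteq> q j}"
  have "p K \<noteq> q K" using Max_in[OF fin] \<open>p \<noteq> q\<close> by (auto simp: K_def)
  have above: "p j = q j" if "j > K" for j using Max_ge[OF fin, of j] that by (auto simp: K_def)
  have "k = K" if "lt (p k) (q k)" "\<forall>j>k. p j = q j" for k
  proof -
    have "p k \<noteq> q k" using that(1) strict_total_orderD(1)[OF lt] by metis
    then show ?thesis using above that(2) \<open>p K \<noteq> q K\<close> by (meson linorder_neqE_nat)
  qed
  then show ?thesis using above unfolding colex_less_def K_def[symmetric] Let_def by blast
qed

lemma colex_less_irrefl: "strict_total_order lt \<Longrightarrow> \<not> colex_less lt p p"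
  unfolding colex_less_def using strict_total_orderD(1) by metis

lemma colex_less_trans:
  assumes lt: "strict_total_order lt" and "colex_less lt p q" and "colex_less lt q w"
  shows "colex_less lt p w"
proof -
  obtain k1 where k1: "lt (p k1) (q k1)" "\<forall>j>k1. p j = q j"
    using \<open>colex_less lt p q\<close> unfolding colex_less_def by blast
  obtain k2 where k2: "lt (q k2) (w k2)" "\<forall>j>k2. q j = w j"
    using \<open>colex_less lt q w\<close> unfolding colex_less_def by blast
  have "lt (p (max k1 k2)) (w (max k1 k2))"
    using k1 k2 strict_total_orderD(2)[OF lt] by (cases k1 k2 rule: linorder_cases) (auto simp: max_def)
  moreover have "\<forall>j>max k1 k2. p j = w j" using k1(2) k2(2) by simp
  ultimately show ?thesis unfolding colex_less_def by blast
qed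

lemma colex_less_asym: "strict_total_order lt \<Longrightarrow> colex_less lt p q \<Longrightarrow> \<not> colex_less lt q p"
  using colex_less_trans colex_less_irrefl by metis

lemma colex_less_total:
  assumes lt: "strict_total_order lt" and "finite {j. p j \<noteq> q j}" and "p \<noteq> q"
  shows "colex_less lt p q \<or> colex_less lt q p"
proof -
  have "{j. q j \<noteq> p j} = {j. p j \<noteq> q j}" by auto
  moreover have "p (Max {j. p j \<noteq> q j}) \<noteq> q (Max {j. p j \<noteq> q j})"
    using Max_in[OF assms(2)] \<open>p \<noteq> q\<close> by auto
  ultimately show ?thesis
    using colex_less_iff_Max[OF lt] colex_less_iff_Max[OF lt, of q p] assms(2,3)
      strict_total_orderD(3)[OF lt] by (simp add: Let_def)
qed

lemma Vspan_subset_rvec: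
  assumes "ordered_basis n b" "i \<le> n"
  shows "Vspan b i \<subseteq> rvec n"
proof
  fix x assume "x \<in> Vspan b i"
  then obtain c where x: "x = lincomb b i c" unfolding Vspan_def by blast
  have "\<forall>j\<in>{1..i}. b j \<in> rvec n" using assms unfolding ordered_basis_def by auto
  then show "x \<in> rvec n" unfolding x rvec_def lincomb_def by simp
qed

lemma Vspan_mono:
  assumes "i \<le> j"
  shows "Vspan b i \<subseteq> Vspan b j"
proof
  fix x assume "x \<in> Vspan b i"
  then obtain c where x: "x = lincomb b i c" unfolding Vspan_def by blast
  define c' where "c' k = (if k \<le> i then c k else 0)" for k
  have "x = lincomb b j c'"
    unfolding x lincomb_def
    by (rule ext, rule sum.mono_neutral_cong_left) (use assms in \<open>auto simp: c'_def\<close>)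
  then show "x \<in> Vspan b j" unfolding Vspan_def by blast
qed

lemma level_unique:
  assumes "x \<in> level b i" "x \<in> level b j"
  shows "i = j"
proof -
  have False if "x \<in> level b k" "x \<in> level b l" "k < l" for k l
  proof -
    have "k \<le> l - 1" using that(3) by simp
    then have "x \<in> Vspan b (l - 1)" using that(1) Vspan_mono[of k "l - 1" b] unfolding level_def by auto
    then show False using that(2) unfolding level_def by simp
  qed
  then show ?thesis using assms by (metis linorder_neqE_nat)
qed

lemma coord_spec:
  assumes "ordered_basis n b" "x \<in> rvec n"
  shows "\<And>j. j \<notin> {1..n} \<Longrightarrow> coord n b x j = 0" and "x = lincomb b n (coord n b x)"
proof -
  have "\<exists>!c. (\<forall>j. j \<notin> {1..n} \<longrightarrow> c j = 0) \<and> x = lincomb b n c"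
    using assms unfolding ordered_basis_def by blast
  from theI'[OF this] show "\<And>j. j \<notin> {1..n} \<Longrightarrow> coord n b x j = 0" "x = lincomb b n (coord n b x)"
    unfolding coord_def by blast+
qed

lemma coord_inject:
  assumes "ordered_basis n b" "x \<in> rvec n" "y \<in> rvec n"
  shows "coord n b x = coord n b y \<longleftrightarrow> x = y"
proof
  assume "coord n b x = coord n b y"
  have "x = lincomb b n (coord n b x)" by (rule coord_spec(2)[OF assms(1,2)])
  also have "\<dots> = lincomb b n (coord n b y)" by (simp add: \<open>coord n b x = coord n b y\<close>)
  also have "\<dots> = y" by (rule coord_spec(2)[OF assms(1,3), symmetric])
  finally show "x = y" .
qed simp

lemma finite_coord_diff:
  assumes "ordered_basis n b" "x \<in> rvec n" "y \<in> rvec n"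
  shows "finite {j. coord n b x j \<noteq> coord n b y j}"
proof (rule finite_subset[of _ "{1..n}"])
  show "{j. coord n b x j \<noteq> coord n b y j} \<subseteq> {1..n}"
    using coord_spec(1)[OF assms(1,2)] coord_spec(1)[OF assms(1,3)] by fastforce
qed simp

lemma lex_less_level_iff:
  assumes lt: "strict_total_order lt" and b: "ordered_basis n b" and i: "i \<in> {1..n}"
    and x: "x \<in> level b i" and y: "y \<in> level b i"
  shows "lex_less lt n b x y \<longleftrightarrow> colex_less lt (coord n b x) (coord n b y)"
proof -
  have "x \<in> rvec n" "y \<in> rvec n" using x y i Vspan_subset_rvec[OF b] unfolding level_def by auto
  note coord_eq = coord_inject[OF b this] and fin = finite_coord_diff[OF b this]
  define L where "L = (let k = Max {j. coord n b x j \<noteq> coord n b y j} in lt (coord n b x k) (coord n b y k))"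
  have no_lower: "\<not> (x \<in> Vspan b (j - 1) \<and> y \<in> level b j)" for j
  proof
    assume "x \<in> Vspan b (j - 1) \<and> y \<in> level b j"
    moreover then have "j = i" using level_unique[OF y] by blast
    ultimately show False using x unfolding level_def by simp
  qed
  have "lex_less lt n b x y \<longleftrightarrow> (\<exists>i\<in>{1..n}. x \<in> level b i \<and> y \<in> level b i \<and> x \<noteq> y \<and> L)"
    unfolding lex_less_def L_def using no_lower by blast
  also have "\<dots> \<longleftrightarrow> x \<noteq> y \<and> L" using x y i by blast
  also have "\<dots> \<longleftrightarrow> colex_less lt (coord n b x) (coord n b y)"
  proof (cases "x = y")
    case False
    then show ?thesis using colex_less_iff_Max[OF lt fin] coord_eq by (simp add: L_def)
  qed (simp add: colex_less_irrefl[OF lt])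
  finally show ?thesis .
qed

lemma the_least_in:
  assumes "finite S" "S \<noteq> {}"
    and trans: "\<And>x y z. x \<in> S \<Longrightarrow> y \<in> S \<Longrightarrow> z \<in> S \<Longrightarrow> R x y \<Longrightarrow> R y z \<Longrightarrow> R x z"
    and total: "\<And>x y. x \<in> S \<Longrightarrow> y \<in> S \<Longrightarrow> x \<noteq> y \<Longrightarrow> R x y \<or> R y x"
    and asym: "\<And>x y. x \<in> S \<Longrightarrow> y \<in> S \<Longrightarrow> R x y \<Longrightarrow> \<not> R y x"
  shows "(THE a. a \<in> S \<and> (\<forall>y\<in>S. y \<noteq> a \<longrightarrow> R a y)) \<in> S"
proof -
  define T where "T = {(x, y). x \<in> S \<and> y \<in> S \<and> R x y}"
  have "T \<subseteq> S \<times> S" by (auto simp: T_def)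
  then have "finite T" using \<open>finite S\<close> by (simp add: finite_subset)
  moreover have "trans T" unfolding T_def by (rule transI) (auto intro: trans)
  then have "acyclic T" unfolding acyclic_def trancl_id[OF \<open>trans T\<close>] using asym by (auto simp: T_def)
  ultimately have "wf T" by (rule finite_acyclic_wf)
  then obtain a where "a \<in> S" and minimal: "\<And>y. (y, a) \<in> T \<Longrightarrow> y \<notin> S"
    using \<open>S \<noteq> {}\<close> wfE_min' by metis
  have "R a y" if "y \<in> S" "y \<noteq> a" for y
    using total[OF \<open>a \<in> S\<close> that(1)] minimal[of y] that \<open>a \<in> S\<close> by (auto simp: T_def)
  then have least: "a \<in> S \<and> (\<forall>y\<in>S. y \<noteq> a \<longrightarrow> R a y)" using \<open>a \<in> S\<close> by blast
  have unique: "a' = a" if "a' \<in> S \<and> (\<forall>y\<in>S. y \<noteq> a' \<longrightarrow> R a' y)" for a'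
  proof (rule ccontr)
    assume "a' \<noteq> a"
    then have "R a a'" "R a' a" using that least by simp_all
    then show False using asym[of a a'] that least by simp
  qed
  show ?thesis
  proof (rule theI2[where a = a])
    show "x = a" if "x \<in> S \<and> (\<forall>y\<in>S. y \<noteq> x \<longrightarrow> R x y)" for x using that by (rule unique)
  qed (use least in simp_all)
qed

section \<open>The greedy algorithm\<close>

lemma greedy_Suc_cases:
  fixes lt :: "'r::{ring_1,finite} \<Rightarrow> 'r \<Rightarrow> bool" and P :: "(nat \<Rightarrow> 'r) \<Rightarrow> bool" and \<Gamma> :: "'r set"
  assumes lt: "strict_total_order lt" and b: "ordered_basis n b" and "Suc i \<le> n"
  defines "C \<equiv> greedy lt n b P \<Gamma> i"
  obtains "greedy lt n b P \<Gamma> (Suc i) = C"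
  | a where "a \<in> rvec n" "\<forall>\<gamma>\<in>\<Gamma>. \<forall>c\<in>C. P (vadd (vsmult \<gamma> a) c)"
      "greedy lt n b P \<Gamma> (Suc i) = {vadd (vsmult r a) c | r c. c \<in> C}"
proof (cases "candidates n b P \<Gamma> (Suc i) C = {}")
  case True
  then show ?thesis using that(1) by (simp add: C_def Let_def)
next
  case False
  define S where "S = candidates n b P \<Gamma> (Suc i) C"
  define a where "a = (THE a. a \<in> S \<and> (\<forall>y\<in>S. y \<noteq> a \<longrightarrow> lex_less lt n b a y))"
  have S_level: "S \<subseteq> level b (Suc i)" by (auto simp: S_def candidates_def)
  moreover have level_rvec: "level b (Suc i) \<subseteq> rvec n"
    using Vspan_subset_rvec[OF b \<open>Suc i \<le> n\<close>] by (auto simp: level_def)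
  ultimately have "S \<subseteq> rvec n" by (rule order.trans)
  then have "finite S" by (rule finite_subset[OF _ finite_rvec])
  have Si: "Suc i \<in> {1..n}" using \<open>Suc i \<le> n\<close> by simp
  have lex_S: "lex_less lt n b x y \<longleftrightarrow> colex_less lt (coord n b x) (coord n b y)"
    if "x \<in> S" "y \<in> S" for x y
    by (rule lex_less_level_iff[OF lt b Si]) (use that S_level in auto)
  have "a \<in> S" unfolding a_def
  proof (rule the_least_in[OF \<open>finite S\<close>])
    show "S \<noteq> {}" using False by (simp add: S_def)
    show "lex_less lt n b x z" if "x \<in> S" "y \<in> S" "z \<in> S" "lex_less lt n b x y" "lex_less lt n b y z"
      for x y z
      using that colex_less_trans[OF lt] by (simp add: lex_S)
    show "\<not> lex_less lt n b y x" if "x \<in> S" "y \<in> S" "lex_less lt n b x y" for x y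
      using that colex_less_asym[OF lt] by (simp add: lex_S)
    show "lex_less lt n b x y \<or> lex_less lt n b y x" if "x \<in> S" "y \<in> S" "x \<noteq> y" for x y
    proof -
      have "x \<in> rvec n" "y \<in> rvec n" using that \<open>S \<subseteq> rvec n\<close> by auto
      then have "coord n b x \<noteq> coord n b y" "finite {j. coord n b x j \<noteq> coord n b y j}"
        using coord_inject[OF b] finite_coord_diff[OF b] \<open>x \<noteq> y\<close> by simp_all
      then show ?thesis using colex_less_total[OF lt] that by (simp add: lex_S)
    qed
  qed
  then have "a \<in> rvec n" "\<forall>\<gamma>\<in>\<Gamma>. \<forall>c\<in>C. P (vadd (vsmult \<gamma> a) c)"
    using \<open>S \<subseteq> rvec n\<close> by (auto simp: S_def candidates_def)
  moreover have "greedy lt n b P \<Gamma> (Suc i) = {vadd (vsmult r a) c | r c. c \<in> C}"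
    using False by (simp add: C_def S_def a_def Let_def)
  ultimately show ?thesis by (rule that(2))
qed

lemma generator_system_associate:
  fixes r :: "'a::{ring_1,finite}"
  assumes "generator_system \<Gamma>" and "r \<noteq> 0"
  obtains \<gamma> u v where "\<gamma> \<in> \<Gamma>" "r = u * \<gamma>" "u * v = 1" "v * u = 1"
proof -
  have "left_ideal_gen r \<noteq> {0}" using left_ideal_gen_self[of r] \<open>r \<noteq> 0\<close> by blast
  then obtain \<gamma> where "\<gamma> \<in> \<Gamma>" and "left_ideal_gen \<gamma> = left_ideal_gen r"
    using assms(1) is_left_ideal_left_ideal_gen unfolding generator_system_def by metis
  moreover obtain u where "u \<in> ring_units" "r = u * \<gamma>"
    using left_ideal_gen_eq_imp_unit_mult calculation(2) by metis
  ultimately show ?thesis using that unfolding ring_units_def by blast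
qed

lemma nonzero_property_extend:
  fixes C :: "(nat \<Rightarrow> 'r::{ring_1,finite}) set"
  assumes P: "left_multiplicative n P" and \<Gamma>: "generator_system \<Gamma>"
    and C: "is_left_submodule n C" and P_C: "\<forall>x\<in>C. x \<noteq> vzero \<longrightarrow> P x"
    and a: "a \<in> rvec n" and P_a: "\<forall>\<gamma>\<in>\<Gamma>. \<forall>c\<in>C. P (vadd (vsmult \<gamma> a) c)"
  shows "\<forall>x\<in>{vadd (vsmult r a) c | r c. c \<in> C}. x \<noteq> vzero \<longrightarrow> P x"
proof (intro ballI impI)
  fix x assume "x \<in> {vadd (vsmult r a) c | r c. c \<in> C}" and "x \<noteq> vzero"
  then obtain r c where x: "x = vadd (vsmult r a) c" and "c \<in> C" by blast
  show "P x"
  proof (cases "r = 0")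
    case True
    then have "x = c" by (simp add: x vadd_def vsmult_def)
    then show ?thesis using P_C \<open>c \<in> C\<close> \<open>x \<noteq> vzero\<close> by blast
  next
    case False
    then obtain \<gamma> u v where "\<gamma> \<in> \<Gamma>" "r = u * \<gamma>" "u * v = 1" "v * u = 1"
      using generator_system_associate[OF \<Gamma>] by metis
    define w where "w = vadd (vsmult \<gamma> a) (vsmult v c)"
      \<comment> \<open>then \<open>x = u w\<close>, and \<open>P w\<close> holds by the choice of \<open>a\<close>\<close>
    have "vsmult v c \<in> C" and "C \<subseteq> rvec n"
      using C \<open>c \<in> C\<close> unfolding is_left_submodule_def by auto
    then have "P w" and "w \<in> rvec n"
      using P_a \<open>\<gamma> \<in> \<Gamma>\<close> a unfolding w_def rvec_def vadd_def vsmult_def by auto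
    moreover have "x = vsmult u w"
      using \<open>r = u * \<gamma>\<close> \<open>u * v = 1\<close>
      by (simp add: x w_def vadd_def vsmult_def distrib_left flip: mult.assoc)
    moreover have "u \<in> ring_units" using \<open>u * v = 1\<close> \<open>v * u = 1\<close> unfolding ring_units_def by blast
    ultimately show ?thesis using P unfolding left_multiplicative_def by blast
  qed
qed

theorem mainTheorem6:
  fixes lt :: "'r::{ring_1, finite} \<Rightarrow> 'r \<Rightarrow> bool"
    and n :: nat
    and b :: "nat \<Rightarrow> nat \<Rightarrow> 'r"
    and P :: "(nat \<Rightarrow> 'r) \<Rightarrow> bool"
    and \<Gamma> :: "'r set"
  assumes "principal_left_ideal_ring TYPE('r)"
    and "respectful lt"
    and "ordered_basis n b"
    and "left_multiplicative n P"
    and "generator_system \<Gamma>"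
  shows "\<forall>i\<le>n. is_left_submodule n (greedy lt n b P \<Gamma> i) \<and>
           (\<forall>x\<in>greedy lt n b P \<Gamma> i. x \<noteq> vzero \<longrightarrow> P x)"
proof (intro allI impI)
  have lt: "strict_total_order lt" using \<open>respectful lt\<close> by (simp add: respectful_def)
  fix i assume "i \<le> n"
  then show "is_left_submodule n (greedy lt n b P \<Gamma> i) \<and> (\<forall>x\<in>greedy lt n b P \<Gamma> i. x \<noteq> vzero \<longrightarrow> P x)"
  proof (induction i)
    case 0
    show ?case by (simp add: is_left_submodule_zero)
  next
    case (Suc i)
    then have IH: "is_left_submodule n (greedy lt n b P \<Gamma> i)"
      "\<forall>x\<in>greedy lt n b P \<Gamma> i. x \<noteq> vzero \<longrightarrow> P x" by simp_all
    show ?case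
    proof (cases rule: greedy_Suc_cases[OF lt \<open>ordered_basis n b\<close> \<open>Suc i \<le> n\<close>, where P = P and \<Gamma> = \<Gamma>])
      case 1
      then show ?thesis using IH by simp
    next
      case (2 a)
      then show ?thesis
        using is_left_submodule_extend[OF IH(1)] nonzero_property_extend[OF assms(4,5) IH] by simp
    qed
  qed
qed

end
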